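(* Let $(X,Y,\phi)$ be an $L$-context and let $X'\subseteq X$, $Y'\subseteq Y$. Then: (1) $\mathcal{K}\phi_{X,Y'}\subseteq\mathcal{K}\phi$ (so that the map $\mathcal{K}\phi\to\mathcal{K}\phi_{X,Y'}$, $\mu\mapsto(\phi_{X,Y'})^\forall(\phi_{X,Y'})^\exists\mu$, has the inclusion $\mathcal{K}\phi_{X,Y'}\hookrightarrow\mathcal{K}\phi$ as its right adjoint). (2) For every $\mu\in\mathcal{K}\phi$ one has $\mu_{X'}\in\mathcal{K}\phi_{X',Y}$; the map $\mathcal{K}\phi_{X',Y}\to\mathcal{K}\phi$, $\mu'\mapsto\phi^\forall\phi^\exists\underline{\mu'}$, is $L$-isometric, i.e. $L^{X'}(\mu',\mu'')=L^X(\phi^\forall\phi^\exists\underline{\mu'},\phi^\forall\phi^\exists\underline{\mu''})$ for all $\mu',\mu''\in\mathcal{K}\phi_{X',Y}$; and its right adjoint is the restriction map $\mathcal{K}\phi\to\mathcal{K}\phi_{X',Y}$, $\mu\mapsto\mu_{X'}$.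
   Context: $L=(L,* )$ is a complete residuated lattice: a complete lattice with bottom $0$ and top $1$, equipped with a commutative associative operation $*$ with unit $1$ satisfying $a*\bigvee_i b_i=\bigvee_i a*b_i$; $\to$ is its residuum ($a*b\le c\iff a\le b\to c$). An $L$-context is a triple $(X,Y,\phi)$ with $X,Y$ sets and $\phi\colon X\times Y\to L$. $L^X$ denotes the set of maps $X\to L$, carrying the $L$-valued order $L^X(\mu,\mu')=\bigwedge_{x\in X}(\mu(x)\to\mu'(x))$. Define $\phi^\exists\colon L^X\to L^Y$, $(\phi^\exists\mu)(y)=\bigvee_{x\in X}\mu(x)*\phi(x,y)$, and $\phi^\forall\colon L^Y\to L^X$, $(\phi^\forall\lambda)(x)=\bigwedge_{y\in Y}(\phi(x,y)\to\lambda(y))$. The property oriented concept $L$-lattice is $\mathcal{K}\phi=\{\mu\in L^X\mid \phi^\forall\phi^\exists\mu=\mu\}$ with the $L$-order inherited from $L^X$. For $X'\subseteq X$, $Y'\subseteq Y$, $\phi_{X',Y'}$ denotes the restriction of $\phi$ to $X'\times Y'$; for $\mu\in L^X$, $\mu_{X'}$ is its restriction to $X'$; for $\mu'\in L^{X'}$, $\underline{\mu'}\in L^X$ is its extension by $0$ (equal to $\mu'(x)$ for $x\in X'$ and $0$ otherwise). A map $f$ between $L$-ordered sets $P,Q$ is $L$-isometric if $P(p,p')=Q(fp,fp')$; monotone maps $f\colon P\to Q$, $g\colon Q\to P$ are adjoint ($f\dashv g$) if $Q(fp,q)=P(p,gq)$ for all $p,q$. *)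

theory Defs
  imports Main
begin

definition complete_residuated_lattice ::
  "('l::complete_lattice \<Rightarrow> 'l \<Rightarrow> 'l) \<Rightarrow> ('l \<Rightarrow> 'l \<Rightarrow> 'l) \<Rightarrow> bool" where
  "complete_residuated_lattice mult imp \<longleftrightarrow>
     (\<forall>a b. mult a b = mult b a) \<and>
     (\<forall>a b c. mult (mult a b) c = mult a (mult b c)) \<and>
     (\<forall>a. mult a top = a) \<and>
     (\<forall>a B. mult a (Sup B) = Sup (mult a ` B)) \<and>
     (\<forall>a b c. mult a b \<le> c \<longleftrightarrow> a \<le> imp b c)"

text \<open>Elements of L^X are represented as maps 'a => 'l that are bot outside X.\<close>
definition Lmaps :: "'a set \<Rightarrow> ('a \<Rightarrow> 'l::complete_lattice) set" where
  "Lmaps X = {\<mu>. \<forall>x. x \<notin> X \<longrightarrow> \<mu> x = bot}"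

definition Lord :: "('l::complete_lattice \<Rightarrow> 'l \<Rightarrow> 'l) \<Rightarrow> 'a set \<Rightarrow> ('a \<Rightarrow> 'l) \<Rightarrow> ('a \<Rightarrow> 'l) \<Rightarrow> 'l" where
  "Lord imp X \<mu> \<mu>' = (INF x\<in>X. imp (\<mu> x) (\<mu>' x))"

definition phi_ex :: "('l::complete_lattice \<Rightarrow> 'l \<Rightarrow> 'l) \<Rightarrow> 'a set \<Rightarrow> 'b set \<Rightarrow>
    ('a \<Rightarrow> 'b \<Rightarrow> 'l) \<Rightarrow> ('a \<Rightarrow> 'l) \<Rightarrow> ('b \<Rightarrow> 'l)" where
  "phi_ex mult X Y \<phi> \<mu> = (\<lambda>y. if y \<in> Y then (SUP x\<in>X. mult (\<mu> x) (\<phi> x y)) else bot)"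

definition phi_all :: "('l::complete_lattice \<Rightarrow> 'l \<Rightarrow> 'l) \<Rightarrow> 'a set \<Rightarrow> 'b set \<Rightarrow>
    ('a \<Rightarrow> 'b \<Rightarrow> 'l) \<Rightarrow> ('b \<Rightarrow> 'l) \<Rightarrow> ('a \<Rightarrow> 'l)" where
  "phi_all imp X Y \<phi> lam = (\<lambda>x. if x \<in> X then (INF y\<in>Y. imp (\<phi> x y) (lam y)) else bot)"

definition clos where
  "clos mult imp X Y \<phi> \<mu> = phi_all imp X Y \<phi> (phi_ex mult X Y \<phi> \<mu>)"

text \<open>The property oriented concept L-lattice K phi_{X,Y} (as a set of elements of L^X).
  The restriction phi_{X',Y'} of phi is represented by using the same phi with carriers X', Y'.\<close>
definition Kphi where
  "Kphi mult imp X Y \<phi> = {\<mu> \<in> Lmaps X. clos mult imp X Y \<phi> \<mu> = \<mu>}"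

definition restr :: "'a set \<Rightarrow> ('a \<Rightarrow> 'l::complete_lattice) \<Rightarrow> ('a \<Rightarrow> 'l)" where
  "restr X' \<mu> = (\<lambda>x. if x \<in> X' then \<mu> x else bot)"

definition ext0 :: "'a set \<Rightarrow> ('a \<Rightarrow> 'l::complete_lattice) \<Rightarrow> ('a \<Rightarrow> 'l)" where
  "ext0 X' \<mu>' = (\<lambda>x. if x \<in> X' then \<mu>' x else bot)"

end

theory Submission
  imports Defs
begin

text \<open>
  The maps \<open>\<phi>\<^sup>\<exists>\<close> and \<open>\<phi>\<^sup>\<forall>\<close> form an \<open>L\<close>-enriched Galois connection, so the
  closure \<open>\<phi>\<^sup>\<forall>\<phi>\<^sup>\<exists>\<close> is extensive, idempotent and \<open>L\<close>-monotone, with fixed points \<open>\<K>\<phi>\<close>.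
  Hence \<open>L\<^sup>X(\<phi>\<^sup>\<forall>\<phi>\<^sup>\<exists>\<mu>, \<nu>) = L\<^sup>X(\<mu>, \<nu>)\<close> for every closed \<open>\<nu>\<close>, and each adjunction of
  the theorem is an instance of this identity. Two observations relate the contexts: the
  closure for fewer attributes \<open>Y' \<subseteq> Y\<close> is an infimum over fewer constraints, so
  \<open>Y'\<close>-closed maps are \<open>Y\<close>-closed; and extension by \<open>0\<close> leaves \<open>\<phi>\<^sup>\<exists>\<close> unchanged, so the
  \<open>X\<close>-closure of the extension of \<open>\<mu>'\<close> agrees on \<open>X'\<close> with the \<open>X'\<close>-closure of \<open>\<mu>'\<close>.
\<close>

locale residuated =
  fixes mult imp :: "'l::complete_lattice \<Rightarrow> 'l \<Rightarrow> 'l"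
  assumes mult_commute: "mult a b = mult b a"
    and mult_assoc: "mult (mult a b) c = mult a (mult b c)"
    and residuation: "mult a b \<le> c \<longleftrightarrow> a \<le> imp b c"
begin

lemma mult_left_mono: "b \<le> c \<Longrightarrow> mult b a \<le> mult c a"
  by (meson order_refl order_trans residuation)

lemma mult_right_mono: "b \<le> c \<Longrightarrow> mult a b \<le> mult a c"
  using mult_left_mono mult_commute by metis

lemma imp_right_mono: "b \<le> c \<Longrightarrow> imp a b \<le> imp a c"
  by (meson order_refl order_trans residuation)

lemma mult_bot_left: "mult bot a = bot"
  using residuation[of bot a bot] by (simp add: bot_unique)

lemma Sup_mult_le_iff: "mult (Sup B) a \<le> c \<longleftrightarrow> (\<forall>b\<in>B. mult b a \<le> c)"
  by (simp add: residuation Sup_le_iff)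

lemma le_Lord_iff: "a \<le> Lord imp X \<mu> \<nu> \<longleftrightarrow> (\<forall>x\<in>X. mult a (\<mu> x) \<le> \<nu> x)"
  unfolding Lord_def by (simp add: le_INF_iff residuation)

lemma Lord_mult_le: "x \<in> X \<Longrightarrow> mult (Lord imp X \<mu> \<nu>) (\<mu> x) \<le> \<nu> x"
  using le_Lord_iff[of "Lord imp X \<mu> \<nu>" X \<mu> \<nu>] by simp

lemma Lord_cong:
  "(\<And>x. x \<in> X \<Longrightarrow> \<mu> x = \<mu>' x) \<Longrightarrow> (\<And>x. x \<in> X \<Longrightarrow> \<nu> x = \<nu>' x)
    \<Longrightarrow> Lord imp X \<mu> \<nu> = Lord imp X \<mu>' \<nu>'"
  unfolding Lord_def by (rule INF_cong) auto

lemma Lord_antimono_left: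
  "(\<And>x. x \<in> X \<Longrightarrow> \<mu> x \<le> \<mu>' x) \<Longrightarrow> Lord imp X \<mu>' \<nu> \<le> Lord imp X \<mu> \<nu>"
  by (simp add: le_Lord_iff) (meson Lord_mult_le mult_right_mono order_trans)

lemma Lord_subset: "X' \<subseteq> X \<Longrightarrow> Lord imp X \<mu> \<nu> \<le> Lord imp X' \<mu> \<nu>"
  unfolding Lord_def by (rule INF_superset_mono) auto

lemma Lord_restr: "X' \<subseteq> X \<Longrightarrow> Lord imp X \<mu> \<nu> \<le> Lord imp X' (restr X' \<mu>) (restr X' \<nu>)"
  using Lord_subset[of X' X \<mu> \<nu>] Lord_cong[of X' \<mu> "restr X' \<mu>" \<nu> "restr X' \<nu>"]
  by (simp add: restr_def)

lemma Lord_ext0: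
  assumes "X' \<subseteq> X"
  shows "Lord imp X (ext0 X' \<mu>) \<nu> = Lord imp X' \<mu> \<nu>"
proof (rule order.antisym)
  have "mult (Lord imp X (ext0 X' \<mu>) \<nu>) (ext0 X' \<mu> x) \<le> \<nu> x" if "x \<in> X'" for x
    using that assms by (intro Lord_mult_le) auto
  then show "Lord imp X (ext0 X' \<mu>) \<nu> \<le> Lord imp X' \<mu> \<nu>"
    by (simp add: le_Lord_iff ext0_def)
  show "Lord imp X' \<mu> \<nu> \<le> Lord imp X (ext0 X' \<mu>) \<nu>"
    by (auto simp: le_Lord_iff ext0_def mult_commute[of _ bot] mult_bot_left intro: Lord_mult_le)
qed

lemma Lord_phi_ex:
  "Lord imp X \<mu> \<mu>' \<le> Lord imp Y (phi_ex mult X Y \<phi> \<mu>) (phi_ex mult X Y \<phi> \<mu>')"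
proof -
  let ?a = "Lord imp X \<mu> \<mu>'"
  have "mult (mult (\<mu> x) (\<phi> x y)) ?a \<le> phi_ex mult X Y \<phi> \<mu>' y" if "x \<in> X" "y \<in> Y" for x y
  proof -
    have "mult (mult (\<mu> x) (\<phi> x y)) ?a = mult (mult ?a (\<mu> x)) (\<phi> x y)"
      by (metis mult_assoc mult_commute)
    also have "\<dots> \<le> mult (\<mu>' x) (\<phi> x y)"
      using that by (intro mult_left_mono Lord_mult_le)
    also have "\<dots> \<le> phi_ex mult X Y \<phi> \<mu>' y"
      using that by (auto simp: phi_ex_def intro: SUP_upper)
    finally show ?thesis .
  qed
  then show ?thesis
    by (auto simp: le_Lord_iff phi_ex_def mult_commute[of ?a] Sup_mult_le_iff)
qed

lemma Lord_phi_all: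
  "Lord imp Y lam lam' \<le> Lord imp X (phi_all imp X Y \<phi> lam) (phi_all imp X Y \<phi> lam')"
proof -
  let ?a = "Lord imp Y lam lam'"
  have "mult (mult ?a (phi_all imp X Y \<phi> lam x)) (\<phi> x y) \<le> lam' y" if "x \<in> X" "y \<in> Y" for x y
  proof -
    have "phi_all imp X Y \<phi> lam x \<le> imp (\<phi> x y) (lam y)"
      using that by (auto simp: phi_all_def intro: INF_lower)
    then have "mult (phi_all imp X Y \<phi> lam x) (\<phi> x y) \<le> lam y"
      by (simp add: residuation)
    then have "mult ?a (mult (phi_all imp X Y \<phi> lam x) (\<phi> x y)) \<le> mult ?a (lam y)"
      by (rule mult_right_mono)
    also have "\<dots> \<le> lam' y"
      using that(2) by (rule Lord_mult_le)
    finally show ?thesis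
      by (simp add: mult_assoc)
  qed
  then show ?thesis
    by (auto simp: le_Lord_iff phi_all_def le_INF_iff residuation[symmetric])
qed

lemma Lord_clos:
  "Lord imp X \<mu> \<mu>' \<le> Lord imp X (clos mult imp X Y \<phi> \<mu>) (clos mult imp X Y \<phi> \<mu>')"
  unfolding clos_def using Lord_phi_ex Lord_phi_all by (rule order_trans)

lemma clos_extensive: "x \<in> X \<Longrightarrow> \<mu> x \<le> clos mult imp X Y \<phi> \<mu> x"
  unfolding clos_def phi_all_def phi_ex_def
  by (auto simp: le_INF_iff residuation[symmetric] intro: SUP_upper)

lemma clos_mono:
  "(\<And>x. x \<in> X \<Longrightarrow> \<mu> x \<le> \<mu>' x) \<Longrightarrow> clos mult imp X Y \<phi> \<mu> x \<le> clos mult imp X Y \<phi> \<mu>' x"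
  unfolding clos_def phi_all_def phi_ex_def
  by (auto intro!: INF_superset_mono imp_right_mono SUP_subset_mono mult_left_mono)

lemma phi_ex_phi_all_le: "phi_ex mult X Y \<phi> (phi_all imp X Y \<phi> lam) y \<le> lam y"
  unfolding phi_ex_def phi_all_def
  by (auto simp: residuation intro!: SUP_least INF_lower)

lemma phi_ex_clos: "phi_ex mult X Y \<phi> (clos mult imp X Y \<phi> \<mu>) = phi_ex mult X Y \<phi> \<mu>"
proof
  fix y
  have "phi_ex mult X Y \<phi> \<mu> y \<le> phi_ex mult X Y \<phi> (clos mult imp X Y \<phi> \<mu>) y"
    unfolding phi_ex_def by (auto intro!: SUP_mono mult_left_mono clos_extensive)
  then show "phi_ex mult X Y \<phi> (clos mult imp X Y \<phi> \<mu>) y = phi_ex mult X Y \<phi> \<mu> y"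
    using phi_ex_phi_all_le unfolding clos_def by (rule order.antisym[rotated])
qed

lemma clos_in_Kphi: "clos mult imp X Y \<phi> \<mu> \<in> Kphi mult imp X Y \<phi>"
  using phi_ex_clos[of X Y \<phi> \<mu>]
  by (simp add: Kphi_def Lmaps_def) (simp add: clos_def phi_all_def)

lemma Lord_clos_Kphi:
  assumes "\<nu> \<in> Kphi mult imp X Y \<phi>"
  shows "Lord imp X (clos mult imp X Y \<phi> \<mu>) \<nu> = Lord imp X \<mu> \<nu>"
proof (rule order.antisym)
  show "Lord imp X (clos mult imp X Y \<phi> \<mu>) \<nu> \<le> Lord imp X \<mu> \<nu>"
    by (rule Lord_antimono_left) (rule clos_extensive)
  show "Lord imp X \<mu> \<nu> \<le> Lord imp X (clos mult imp X Y \<phi> \<mu>) \<nu>"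
    using Lord_clos[of X \<mu> \<nu> Y \<phi>] assms by (simp add: Kphi_def)
qed

lemma Kphi_mono_attributes:
  assumes "Y' \<subseteq> Y"
  shows "Kphi mult imp X Y' \<phi> \<subseteq> Kphi mult imp X Y \<phi>"
proof
  fix \<mu> assume \<mu>: "\<mu> \<in> Kphi mult imp X Y' \<phi>"
  have "clos mult imp X Y \<phi> \<mu> x = \<mu> x" for x
  proof (cases "x \<in> X")
    case True
    have "clos mult imp X Y \<phi> \<mu> x \<le> clos mult imp X Y' \<phi> \<mu> x"
      using True assms unfolding clos_def phi_all_def phi_ex_def
      by (auto intro!: INF_superset_mono)
    with True \<mu> show ?thesis
      by (auto simp: Kphi_def intro: order.antisym clos_extensive)
  next
    case False
    with \<mu> show ?thesis by (simp add: Kphi_def Lmaps_def clos_def phi_all_def)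
  qed
  with \<mu> show "\<mu> \<in> Kphi mult imp X Y \<phi>"
    by (auto simp: Kphi_def)
qed

lemma phi_ex_ext0:
  assumes "X' \<subseteq> X"
  shows "phi_ex mult X Y \<phi> (ext0 X' \<mu>) = phi_ex mult X' Y \<phi> \<mu>"
proof
  fix y
  have "(SUP x\<in>X. mult (ext0 X' \<mu> x) (\<phi> x y)) = (SUP x\<in>X'. mult (\<mu> x) (\<phi> x y))"
  proof (rule order.antisym)
    show "(SUP x\<in>X. mult (ext0 X' \<mu> x) (\<phi> x y)) \<le> (SUP x\<in>X'. mult (\<mu> x) (\<phi> x y))"
      by (rule SUP_least) (auto simp: ext0_def mult_bot_left intro: SUP_upper)
    show "(SUP x\<in>X'. mult (\<mu> x) (\<phi> x y)) \<le> (SUP x\<in>X. mult (ext0 X' \<mu> x) (\<phi> x y))"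
      using assms by (auto simp: ext0_def intro!: SUP_least SUP_upper2)
  qed
  then show "phi_ex mult X Y \<phi> (ext0 X' \<mu>) y = phi_ex mult X' Y \<phi> \<mu> y"
    by (simp add: phi_ex_def)
qed

lemma clos_ext0:
  "X' \<subseteq> X \<Longrightarrow> x \<in> X' \<Longrightarrow> clos mult imp X Y \<phi> (ext0 X' \<mu>) x = clos mult imp X' Y \<phi> \<mu> x"
  unfolding clos_def by (auto simp: phi_ex_ext0 phi_all_def)

lemma restr_in_Kphi:
  assumes "X' \<subseteq> X" and \<mu>: "\<mu> \<in> Kphi mult imp X Y \<phi>"
  shows "restr X' \<mu> \<in> Kphi mult imp X' Y \<phi>"
proof -
  have "clos mult imp X' Y \<phi> (restr X' \<mu>) x = restr X' \<mu> x" for x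
  proof (cases "x \<in> X'")
    case True
    have "restr X' \<mu> = ext0 X' (restr X' \<mu>)"
      by (simp add: restr_def ext0_def fun_eq_iff)
    then have "clos mult imp X' Y \<phi> (restr X' \<mu>) x = clos mult imp X Y \<phi> (restr X' \<mu>) x"
      using clos_ext0[OF assms(1) True, of Y \<phi> "restr X' \<mu>"] by simp
    also have "\<dots> \<le> clos mult imp X Y \<phi> \<mu> x"
      by (rule clos_mono) (simp add: restr_def)
    also have "\<dots> = restr X' \<mu> x"
      using True \<mu> by (simp add: Kphi_def restr_def)
    finally show ?thesis
      using clos_extensive[OF True] by (rule order.antisym)
  next
    case False
    then show ?thesis by (simp add: clos_def phi_all_def restr_def)
  qed
  then show ?thesis
    by (auto simp: Kphi_def Lmaps_def restr_def)
qed

lemma Lord_clos_ext0_restr: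
  assumes "X' \<subseteq> X" and "\<mu> \<in> Kphi mult imp X Y \<phi>"
  shows "Lord imp X (clos mult imp X Y \<phi> (ext0 X' \<mu>')) \<mu> = Lord imp X' \<mu>' (restr X' \<mu>)"
  using assms Lord_cong[of X' \<mu>' \<mu>' \<mu> "restr X' \<mu>"]
  by (simp add: Lord_clos_Kphi Lord_ext0 restr_def)

lemma Lord_clos_ext0_isometric:
  assumes "X' \<subseteq> X" and "\<mu>'' \<in> Kphi mult imp X' Y \<phi>"
  shows "Lord imp X (clos mult imp X Y \<phi> (ext0 X' \<mu>')) (clos mult imp X Y \<phi> (ext0 X' \<mu>''))
    = Lord imp X' \<mu>' \<mu>''"
proof -
  have "Lord imp X' \<mu>' (clos mult imp X Y \<phi> (ext0 X' \<mu>'')) = Lord imp X' \<mu>' \<mu>''"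
    using assms by (intro Lord_cong) (simp_all add: clos_ext0 Kphi_def)
  with assms(1) show ?thesis
    by (simp add: Lord_clos_Kphi clos_in_Kphi Lord_ext0)
qed

end

lemma residuated_if_complete_residuated_lattice:
  "complete_residuated_lattice mult imp \<Longrightarrow> residuated mult imp"
  unfolding complete_residuated_lattice_def residuated_def by blast

theorem mainTheorem1:
  fixes mult imp :: "'l::complete_lattice \<Rightarrow> 'l \<Rightarrow> 'l"
    and X X' :: "'a set" and Y Y' :: "'b set" and \<phi> :: "'a \<Rightarrow> 'b \<Rightarrow> 'l"
  assumes L: "complete_residuated_lattice mult imp"
    and XX: "X' \<subseteq> X" and YY: "Y' \<subseteq> Y"
  shows
    \<comment> \<open>(1)\<close>
    "Kphi mult imp X Y' \<phi> \<subseteq> Kphi mult imp X Y \<phi>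
     \<and> (\<forall>\<mu>\<in>Kphi mult imp X Y \<phi>. clos mult imp X Y' \<phi> \<mu> \<in> Kphi mult imp X Y' \<phi>)
     \<and> (\<forall>\<mu>\<in>Kphi mult imp X Y \<phi>. \<forall>\<mu>'\<in>Kphi mult imp X Y \<phi>.
          Lord imp X \<mu> \<mu>' \<le> Lord imp X (clos mult imp X Y' \<phi> \<mu>) (clos mult imp X Y' \<phi> \<mu>'))
     \<and> (\<forall>\<mu>\<in>Kphi mult imp X Y \<phi>. \<forall>\<nu>\<in>Kphi mult imp X Y' \<phi>.
          Lord imp X (clos mult imp X Y' \<phi> \<mu>) \<nu> = Lord imp X \<mu> \<nu>)
     \<and>
    \<comment> \<open>(2)\<close>
     (\<forall>\<mu>\<in>Kphi mult imp X Y \<phi>. restr X' \<mu> \<in> Kphi mult imp X' Y \<phi>)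
     \<and> (\<forall>\<mu>'\<in>Kphi mult imp X' Y \<phi>. clos mult imp X Y \<phi> (ext0 X' \<mu>') \<in> Kphi mult imp X Y \<phi>)
     \<and> (\<forall>\<mu>'\<in>Kphi mult imp X' Y \<phi>. \<forall>\<mu>''\<in>Kphi mult imp X' Y \<phi>.
          Lord imp X' \<mu>' \<mu>'' =
          Lord imp X (clos mult imp X Y \<phi> (ext0 X' \<mu>')) (clos mult imp X Y \<phi> (ext0 X' \<mu>'')))
     \<and> (\<forall>\<mu>\<in>Kphi mult imp X Y \<phi>. \<forall>\<mu>'\<in>Kphi mult imp X Y \<phi>.
          Lord imp X \<mu> \<mu>' \<le> Lord imp X' (restr X' \<mu>) (restr X' \<mu>'))
     \<and> (\<forall>\<mu>'\<in>Kphi mult imp X' Y \<phi>. \<forall>\<mu>\<in>Kphi mult imp X Y \<phi>.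
          Lord imp X (clos mult imp X Y \<phi> (ext0 X' \<mu>')) \<mu> = Lord imp X' \<mu>' (restr X' \<mu>))"
proof -
  interpret residuated mult imp
    using L by (rule residuated_if_complete_residuated_lattice)
  show ?thesis
    by (intro conjI ballI Kphi_mono_attributes[OF YY] clos_in_Kphi Lord_clos Lord_clos_Kphi
        restr_in_Kphi[OF XX] Lord_clos_ext0_isometric[OF XX, symmetric] Lord_restr[OF XX]
        Lord_clos_ext0_restr[OF XX])
qed

end
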